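(* Let $X$ and $Y$ be metric spaces and let $f:X\to Y$ be a local homeomorphism. Suppose that $Y$ is $\mathcal P$-connected and locally $\mathcal P$-contractible for some family $\mathcal P$ of paths in $Y$. Then $f$ is a covering projection if and only if $f$ has the continuation property for every path in $\mathcal P$.
   Context: A family $\mathcal P$ of continuous paths $p:[0,1]\to Y$ in a metric space $Y$ is given. $Y$ is $\mathcal P$-connected if (i) whenever $p\in\mathcal P$, the reverse path $\bar p(t)=p(1-t)$ belongs to $\mathcal P$, and (ii) every two points of $Y$ can be joined by a path in $\mathcal P$. $Y$ is locally $\mathcal P$-contractible if every $y_0\in Y$ has an open neighborhood $U$ with a continuous homotopy $H:U\times[0,1]\to U$ such that $H(y_0,t)=y_0$ for all $t$, $H(y,0)=y_0$ and $H(y,1)=y$ for all $y\in U$, and for every $y\in U$ the path $t\mapsto H(y,t)$ belongs to $\mathcal P$. A continuous map $f:X\to Y$ has the continuation property for a path $p:[0,1]\to Y$ if for every $b\in(0,1]$ and every continuous path $q:[0,b)\to X$ with $f\circ q=p$ on $[0,b)$, there exists a sequence $(t_n)$ in $[0,b)$ converging to $b$ such that $(q(t_n))$ converges in $X$. *)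

theory Defs
  imports "HOL-Analysis.Analysis"
begin

text \<open>Paths are functions real to Y, only their values on [0,1] matter.
  A path p "belongs to" the family P if some member of P agrees with p on [0,1].\<close>
definition in_family :: "(real \<Rightarrow> 'b) set \<Rightarrow> (real \<Rightarrow> 'b) \<Rightarrow> bool" where
  "in_family P p \<longleftrightarrow> (\<exists>p'\<in>P. \<forall>t\<in>{0..1}. p' t = p t)"

definition P_connected :: "(real \<Rightarrow> 'b::topological_space) set \<Rightarrow> bool" where
  "P_connected P \<longleftrightarrow>
     (\<forall>p\<in>P. in_family P (reversepath p)) \<and>
     (\<forall>x y. \<exists>p\<in>P. pathstart p = x \<and> pathfinish p = y)"

definition locally_P_contractible :: "(real \<Rightarrow> 'b::topological_space) set \<Rightarrow> bool" where
  "locally_P_contractible P \<longleftrightarrow>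
     (\<forall>y0. \<exists>U H. open U \<and> y0 \<in> U \<and>
        continuous_on (U \<times> {0..1}) H \<and> H ` (U \<times> {0..1}) \<subseteq> U \<and>
        (\<forall>t\<in>{0..1}. H (y0, t) = y0) \<and>
        (\<forall>y\<in>U. H (y, 0) = y0 \<and> H (y, 1) = y) \<and>
        (\<forall>y\<in>U. in_family P (\<lambda>t. H (y, t))))"

definition local_homeomorphism :: "('a::topological_space \<Rightarrow> 'b::topological_space) \<Rightarrow> bool" where
  "local_homeomorphism f \<longleftrightarrow>
     (\<forall>x. \<exists>U g. open U \<and> x \<in> U \<and> open (f ` U) \<and> homeomorphism U (f ` U) f g)"

definition continuation_property ::
    "('a::metric_space \<Rightarrow> 'b) \<Rightarrow> (real \<Rightarrow> 'b) \<Rightarrow> bool" where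
  "continuation_property f p \<longleftrightarrow>
     (\<forall>b\<in>{0<..1}. \<forall>q::real \<Rightarrow> 'a.
        continuous_on {0..<b} q \<and> (\<forall>t\<in>{0..<b}. f (q t) = p t) \<longrightarrow>
        (\<exists>tn::nat \<Rightarrow> real. (\<forall>n. tn n \<in> {0..<b}) \<and> tn \<longlonglongrightarrow> b \<and>
            convergent (\<lambda>n. q (tn n))))"

end

theory Submission
  imports Defs
begin

(* Lifts along a local homeomorphism are unique on connected parameter sets. If every path of P
   has the continuation property, every path of P lifts: by real induction on [0,1], lifts on
   [0,s] for all s < tau glue to one map on [0,tau), the continuation property gives a limit point
   over p tau, and a local inverse of f near that point extends the lift beyond tau.

   Given y0, contract a neighbourhood U of y0 along paths of P. Lifting the contraction paths from
   each point x over y0 and taking endpoints gives sections of f over U; they are continuous by a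
   second real induction on the time parameter. Uniqueness of lifts, applied also to the reversed
   contraction paths, shows that the images of these sections are disjoint and cover the preimage
   of U, so U is evenly covered.

   Conversely, over an evenly covered neighbourhood of p b the tail of a lift on [0,b) stays in a
   single sheet, hence converges. *)

lemma local_homeomorphism_continuous:
  fixes f :: "'a::metric_space \<Rightarrow> 'b::topological_space"
  assumes "local_homeomorphism f"
  shows "continuous_on S f"
proof -
  have "continuous (at x) f" for x
  proof -
    obtain U g where "open U" "x \<in> U" "homeomorphism U (f ` U) f g"
      using assms unfolding local_homeomorphism_def by blast
    then show ?thesis
      by (meson continuous_on_eq_continuous_at homeomorphism_cont1)
  qed
  then show ?thesis
    by (simp add: continuous_at_imp_continuous_on)
qed

lemma local_homeomorphism_lift_unique:
  fixes f :: "'a::metric_space \<Rightarrow> 'b::topological_space"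
    and q q' :: "'c::topological_space \<Rightarrow> 'a"
  assumes lh: "local_homeomorphism f" and I: "connected I"
    and q: "continuous_on I q" "continuous_on I q'"
    and same_image: "\<And>t. t \<in> I \<Longrightarrow> f (q t) = f (q' t)"
    and "a \<in> I" "q a = q' a" "t \<in> I"
  shows "q t = q' t"
proof -
  let ?E = "{t \<in> I. q t = q' t}"
  have "closedin (top_of_set I) ?E"
    using closedin_continuous_maps_eq[OF Hausdorff_space_euclidean, of "top_of_set I" q q'] q
    by simp
  moreover have "openin (top_of_set I) ?E"
    unfolding openin_subopen[of _ ?E]
  proof (intro ballI)
    fix s assume s: "s \<in> ?E"
    obtain V g where V: "open V" "q s \<in> V" "homeomorphism V (f ` V) f g"
      using lh unfolding local_homeomorphism_def by blast
    let ?N = "(I \<inter> q -` V) \<inter> (I \<inter> q' -` V)"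
    have "openin (top_of_set I) ?N"
      using continuous_openin_preimage_gen[OF q(1) V(1)]
        continuous_openin_preimage_gen[OF q(2) V(1)]
      by blast
    moreover have "?N \<subseteq> ?E"
    proof
      fix r assume r: "r \<in> ?N"
      then have "q r = g (f (q' r))"
        using same_image homeomorphism_apply1[OF V(3)] by (metis IntD1 IntD2 vimageD)
      then show "r \<in> ?E"
        using r homeomorphism_apply1[OF V(3)] by auto
    qed
    ultimately show "\<exists>T. openin (top_of_set I) T \<and> s \<in> T \<and> T \<subseteq> ?E"
      using s V(2) by auto
  qed
  ultimately have "?E = I"
    using I \<open>a \<in> I\<close> \<open>q a = q' a\<close> unfolding connected_clopen by blast
  then show ?thesis
    using \<open>t \<in> I\<close> by blast
qed

lemma lift_eq_local_inverse:
  fixes f :: "'a::metric_space \<Rightarrow> 'b::topological_space"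
  assumes lh: "local_homeomorphism f" and hom: "homeomorphism V (f ` V) f g"
    and "connected I" and q: "continuous_on I q" and p: "continuous_on I p" "p ` I \<subseteq> f ` V"
    and lift: "\<And>t. t \<in> I \<Longrightarrow> f (q t) = p t"
    and "a \<in> I" "q a \<in> V" "t \<in> I"
  shows "q t = g (p t)"
proof (rule local_homeomorphism_lift_unique[OF lh \<open>connected I\<close> q _ _ \<open>a \<in> I\<close> _ \<open>t \<in> I\<close>])
  show "continuous_on I (\<lambda>t. g (p t))"
    using continuous_on_compose2[OF homeomorphism_cont2[OF hom] p] by blast
  show "f (q t) = f (g (p t))" if "t \<in> I" for t
    using lift that p(2) homeomorphism_apply2[OF hom] by (metis image_subset_iff)
  show "q a = g (p a)"
    using lift \<open>a \<in> I\<close> \<open>q a \<in> V\<close> homeomorphism_apply1[OF hom] by metis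
qed

lemma unit_interval_induction:
  fixes Q :: "real \<Rightarrow> bool"
  assumes step: "\<And>\<tau>. \<tau> \<in> {0..1} \<Longrightarrow> (\<And>s. s \<in> {0..<\<tau>} \<Longrightarrow> Q s)
      \<Longrightarrow> \<exists>e>0. \<forall>s\<in>{0..1}. s < \<tau> + e \<longrightarrow> Q s"
    and "t \<in> {0..1}"
  shows "Q t"
proof (rule ccontr)
  define T where "T = {s \<in> {0..1}. \<not> Q s}"
  assume "\<not> Q t"
  then have "t \<in> T"
    using \<open>t \<in> {0..1}\<close> by (simp add: T_def)
  then have "T \<noteq> {}" and bdd: "bdd_below T"
    by (auto simp: T_def bdd_below_def)
  define m where "m = Inf T"
  have "m \<in> {0..1}"
    using cInf_greatest[OF \<open>T \<noteq> {}\<close>, of 0] cInf_lower[OF \<open>t \<in> T\<close> bdd] \<open>t \<in> {0..1}\<close>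
    by (auto simp: m_def T_def)
  moreover have "Q s" if "s \<in> {0..<m}" for s
    using cInf_lower[OF _ bdd, of s] that \<open>m \<in> {0..1}\<close> by (force simp: m_def T_def)
  ultimately obtain e where "e > 0" "\<forall>s\<in>{0..1}. s < m + e \<longrightarrow> Q s"
    using step by blast
  moreover obtain s where "s \<in> T" "s < m + e"
    using cInf_less_iff[OF \<open>T \<noteq> {}\<close> bdd] \<open>e > 0\<close> unfolding m_def by (meson less_add_same_cancel1)
  ultimately show False
    by (auto simp: T_def)
qed

lemma continuous_within_ball_into_open:
  fixes h :: "'a::metric_space \<Rightarrow> 'b::topological_space"
  assumes "continuous (at a within S) h" "open V" "h a \<in> V"
  obtains d where "d > 0" "\<And>x. x \<in> S \<Longrightarrow> dist x a < d \<Longrightarrow> h x \<in> V"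
proof -
  have "\<forall>\<^sub>F x in at a within S. h x \<in> V"
    using assms unfolding continuous_within by (rule topological_tendstoD)
  then obtain d where "d > 0" "\<And>x. x \<in> S \<Longrightarrow> x \<noteq> a \<Longrightarrow> dist x a < d \<Longrightarrow> h x \<in> V"
    unfolding eventually_at by blast
  then show ?thesis
    using that \<open>h a \<in> V\<close> by metis
qed

definition partial_lift ::
    "('a::topological_space \<Rightarrow> 'b) \<Rightarrow> (real \<Rightarrow> 'b) \<Rightarrow> 'a \<Rightarrow> real \<Rightarrow> (real \<Rightarrow> 'a) \<Rightarrow> bool"
  where "partial_lift f p x s q \<longleftrightarrow>
    continuous_on {0..s} q \<and> (\<forall>t\<in>{0..s}. f (q t) = p t) \<and> q 0 = x"

lemma partial_lift_restrict:
  assumes "partial_lift f p x t q" "0 \<le> s" "s \<le> t"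
  shows "partial_lift f p x s q"
  using assms unfolding partial_lift_def by (auto intro: continuous_on_subset)

lemma partial_lift_unique:
  fixes f :: "'a::metric_space \<Rightarrow> 'b::topological_space"
  assumes lh: "local_homeomorphism f"
    and "partial_lift f p x s q" "partial_lift f p x s q'" "t \<in> {0..s}"
  shows "q t = q' t"
  using local_homeomorphism_lift_unique[OF lh connected_Icc[of 0 s], where q=q and q'=q' and a=0]
    assms(2-4)
  unfolding partial_lift_def by simp

lemma partial_lift_extend:
  fixes s t :: real
  assumes hom: "homeomorphism V (f ` V) f g"
    and q: "partial_lift f p x t q" "q t \<in> V" "0 \<le> t" "t \<le> s"
    and p: "continuous_on {t..s} p" "p ` {t..s} \<subseteq> f ` V"
  shows "partial_lift f p x s (\<lambda>r. if r \<le> t then q r else g (p r))"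
  unfolding partial_lift_def
proof (intro conjI ballI)
  have gp: "continuous_on {t..s} (\<lambda>r. g (p r))"
    using continuous_on_compose2[OF homeomorphism_cont2[OF hom] p] by blast
  have "f (q t) = p t"
    using q(1,3) by (simp add: partial_lift_def)
  then have "q t = g (p t)"
    using homeomorphism_apply1[OF hom q(2)] by simp
  then show "continuous_on {0..s} (\<lambda>r. if r \<le> t then q r else g (p r))"
  proof (intro continuous_on_cases_le[where h="\<lambda>r. r"] continuous_on_id)
    show "continuous_on {r \<in> {0..s}. r \<le> t} q"
      using q(1) by (auto simp: partial_lift_def intro: continuous_on_subset)
    show "continuous_on {r \<in> {0..s}. t \<le> r} (\<lambda>r. g (p r))"
      by (rule continuous_on_subset[OF gp]) auto
  qed auto
  show "f (if r \<le> t then q r else g (p r)) = p r" if "r \<in> {0..s}" for r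
  proof (cases "r \<le> t")
    case False
    then have "p r \<in> f ` V"
      using p(2) that by auto
    then show ?thesis
      using False homeomorphism_apply2[OF hom] by simp
  qed (use that q(1) in \<open>auto simp: partial_lift_def\<close>)
qed (use q in \<open>auto simp: partial_lift_def\<close>)

lemma partial_lifts_glue:
  fixes f :: "'a::metric_space \<Rightarrow> 'b::topological_space" and \<tau> :: real
  assumes lh: "local_homeomorphism f"
    and lifts: "\<And>s. s \<in> {0..<\<tau>} \<Longrightarrow> \<exists>q. partial_lift f p x s q"
  obtains Q where "continuous_on {0..<\<tau>} Q" "\<And>s. s \<in> {0..<\<tau>} \<Longrightarrow> partial_lift f p x s Q"
proof
  define Q where "Q t = (SOME q. partial_lift f p x t q) t" for t
  have agree: "Q t = q t" if "partial_lift f p x s q" "t \<in> {0..s}" "s < \<tau>" for s q t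
  proof -
    have "\<exists>q. partial_lift f p x t q"
      using lifts[of t] that(2,3) by simp
    then have "partial_lift f p x t (SOME q. partial_lift f p x t q)"
      by (rule someI_ex)
    moreover have "partial_lift f p x t q"
      using partial_lift_restrict that(1,2) by auto
    ultimately show ?thesis
      unfolding Q_def using partial_lift_unique[OF lh] that(2) by auto
  qed
  show Q_lift: "partial_lift f p x s Q" if s: "s \<in> {0..<\<tau>}" for s
  proof -
    obtain q where q: "partial_lift f p x s q"
      using lifts[OF s] by blast
    then have "continuous_on {0..s} Q"
      unfolding partial_lift_def by (metis agree[OF q] s continuous_on_eq atLeastLessThan_iff)
    then show ?thesis
      using q agree[OF q] s by (auto simp: partial_lift_def)
  qed
  show "continuous_on {0..<\<tau>} Q"
    unfolding continuous_on_eq_continuous_within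
  proof
    fix t assume t: "t \<in> {0..<\<tau>}"
    define s where "s = (t + \<tau>) / 2"
    have "continuous_on {0..s} Q"
      using Q_lift[of s] t by (simp add: s_def partial_lift_def)
    then have "continuous (at t within {0..s}) Q"
      using t by (auto simp: s_def continuous_on_eq_continuous_within)
    moreover have "at t within {0..<\<tau>} = at t within {0..s}"
      by (rule at_within_nhd[of _ "{..<s}"]) (use t in \<open>auto simp: s_def\<close>)
    ultimately show "continuous (at t within {0..<\<tau>}) Q"
      by simp
  qed
qed

lemma continuation_property_limit_point:
  fixes f :: "'a::metric_space \<Rightarrow> 'b::metric_space"
  assumes f: "continuous_on UNIV f" and p: "continuous_on {0..1} p"
    and "continuation_property f p" and \<tau>: "\<tau> \<in> {0<..1}"
    and Q: "continuous_on {0..<\<tau>} Q" "\<And>t. t \<in> {0..<\<tau>} \<Longrightarrow> f (Q t) = p t"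
  obtains x where "f x = p \<tau>"
    "\<And>V e. open V \<Longrightarrow> x \<in> V \<Longrightarrow> 0 < e \<Longrightarrow> \<exists>t\<in>{0..<\<tau>}. \<tau> - e < t \<and> Q t \<in> V"
proof -
  obtain tn where tn: "\<forall>n. tn n \<in> {0..<\<tau>}" "tn \<longlonglongrightarrow> \<tau>" "convergent (\<lambda>n. Q (tn n))"
    using assms(3) \<tau> Q unfolding continuation_property_def by blast
  then obtain x where x: "(\<lambda>n. Q (tn n)) \<longlonglongrightarrow> x"
    unfolding convergent_def by blast
  have "(\<lambda>n. f (Q (tn n))) \<longlonglongrightarrow> f x"
    using continuous_on_tendsto_compose[OF f x] by simp
  moreover have "(\<lambda>n. p (tn n)) \<longlonglongrightarrow> p \<tau>"
  proof (rule continuous_on_tendsto_compose[OF p tn(2)])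
    have "tn n \<in> {0..1}" for n
      using tn(1)[rule_format, of n] \<tau> by auto
    then show "\<forall>\<^sub>F n in sequentially. tn n \<in> {0..1}"
      by simp
  qed (use \<tau> in auto)
  moreover have "(\<lambda>n. f (Q (tn n))) = (\<lambda>n. p (tn n))"
    using Q(2) tn(1) by auto
  ultimately have "f x = p \<tau>"
    using LIMSEQ_unique by metis
  moreover have "\<exists>t\<in>{0..<\<tau>}. \<tau> - e < t \<and> Q t \<in> V"
    if "open V" "x \<in> V" "0 < e" for V and e :: real
  proof -
    have "\<forall>\<^sub>F n in sequentially. \<tau> - e < tn n \<and> Q (tn n) \<in> V"
      using order_tendstoD(1)[OF tn(2), of "\<tau> - e"] topological_tendstoD[OF x that(1,2)] \<open>0 < e\<close>
      by (simp add: eventually_conj)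
    then obtain n where "\<tau> - e < tn n \<and> Q (tn n) \<in> V"
      unfolding eventually_sequentially by blast
    then show ?thesis
      using tn(1) by blast
  qed
  ultimately show ?thesis
    using that by blast
qed

lemma continuation_property_partial_lift_limit:
  fixes f :: "'a::metric_space \<Rightarrow> 'b::metric_space" and \<tau> :: real
  assumes lh: "local_homeomorphism f" and p: "continuous_on {0..1} p"
    and cp: "continuation_property f p" and x: "f x = p 0" and \<tau>: "\<tau> \<in> {0..1}"
    and below: "\<And>s. s \<in> {0..<\<tau>} \<Longrightarrow> \<exists>q. partial_lift f p x s q"
  obtains y where "f y = p \<tau>" "\<And>V e. open V \<Longrightarrow> y \<in> V \<Longrightarrow> 0 < e \<Longrightarrow>
    \<exists>t q. t \<in> {0..\<tau>} \<and> \<tau> - e < t \<and> partial_lift f p x t q \<and> q t \<in> V"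
proof (cases "\<tau> = 0")
  case True
  have "partial_lift f p x 0 (\<lambda>_. x)"
    using x by (simp add: partial_lift_def)
  then show ?thesis
    using that[of x] x True by fastforce
next
  case False
  obtain Q where Q: "continuous_on {0..<\<tau>} Q" "\<And>s. s \<in> {0..<\<tau>} \<Longrightarrow> partial_lift f p x s Q"
    using partial_lifts_glue[OF lh below] by blast
  obtain y where y: "f y = p \<tau>"
    and Q_near: "\<And>V e. open V \<Longrightarrow> y \<in> V \<Longrightarrow> 0 < e \<Longrightarrow> \<exists>t\<in>{0..<\<tau>}. \<tau> - e < t \<and> Q t \<in> V"
    using continuation_property_limit_point[OF local_homeomorphism_continuous[OF lh] p cp _ Q(1)]
      Q(2) False \<tau> by (auto simp: partial_lift_def)
  show ?thesis
  proof (rule that[OF y])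
    fix V and e :: real assume "open V" "y \<in> V" "0 < e"
    then obtain t where "t \<in> {0..<\<tau>}" "\<tau> - e < t" "Q t \<in> V"
      using Q_near by blast
    then show "\<exists>t q. t \<in> {0..\<tau>} \<and> \<tau> - e < t \<and> partial_lift f p x t q \<and> q t \<in> V"
      using Q(2) by fastforce
  qed
qed

lemma continuation_property_lift_path:
  fixes f :: "'a::metric_space \<Rightarrow> 'b::metric_space"
  assumes lh: "local_homeomorphism f" and p: "path p" and cp: "continuation_property f p"
    and x: "f x = pathstart p"
  obtains q where "path q" "pathstart q = x" "\<And>t. t \<in> {0..1} \<Longrightarrow> f (q t) = p t"
proof -
  have "\<exists>q. partial_lift f p x 1 q"
  proof (rule unit_interval_induction)
    fix \<tau> :: real
    assume \<tau>: "\<tau> \<in> {0..1}" and below: "\<And>s. s \<in> {0..<\<tau>} \<Longrightarrow> \<exists>q. partial_lift f p x s q"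
    obtain y where y: "f y = p \<tau>" and near: "\<And>V e. open V \<Longrightarrow> y \<in> V \<Longrightarrow> 0 < e \<Longrightarrow>
        \<exists>t q. t \<in> {0..\<tau>} \<and> \<tau> - e < t \<and> partial_lift f p x t q \<and> q t \<in> V"
      using continuation_property_partial_lift_limit[OF lh p[unfolded path_def] cp _ \<tau> below] x
      by (metis pathstart_def)
    obtain V g where V: "open V" "y \<in> V" "open (f ` V)" "homeomorphism V (f ` V) f g"
      using lh unfolding local_homeomorphism_def by blast
    have "continuous (at \<tau> within {0..1}) p"
      using p \<tau> by (simp add: path_def continuous_on_eq_continuous_within)
    then obtain e where "e > 0" and pV: "\<And>t. t \<in> {0..1} \<Longrightarrow> dist t \<tau> < e \<Longrightarrow> p t \<in> f ` V"
      using continuous_within_ball_into_open V y by (metis imageI)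
    obtain t q where t: "t \<in> {0..\<tau>}" "\<tau> - e < t" and q: "partial_lift f p x t q" "q t \<in> V"
      using near[OF V(1,2) \<open>e > 0\<close>] by blast
    have "\<exists>q. partial_lift f p x s q" if s: "s \<in> {0..1}" "s < \<tau> + e" for s
    proof (cases "s \<le> t")
      case True
      then show ?thesis
        using partial_lift_restrict[OF q(1)] s by auto
    next
      case False
      have "continuous_on {t..s} p"
        using p s t by (auto simp: path_def intro: continuous_on_subset)
      moreover have "p ` {t..s} \<subseteq> f ` V"
        using pV s t \<tau> by (auto simp: dist_real_def)
      ultimately have "partial_lift f p x s (\<lambda>r. if r \<le> t then q r else g (p r))"
        using t False by (intro partial_lift_extend[OF V(4) q]) auto
      then show ?thesis
        by blast
    qed
    then show "\<exists>e>0. \<forall>s\<in>{0..1}. s < \<tau> + e \<longrightarrow> (\<exists>q. partial_lift f p x s q)"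
      using \<open>e > 0\<close> by blast
  qed simp
  then show ?thesis
    using that unfolding partial_lift_def path_def pathstart_def by blast
qed

lemma continuous_within_Times_ball_into_open:
  fixes H :: "'a::metric_space \<times> 'b::metric_space \<Rightarrow> 'c::topological_space"
  assumes "continuous (at (a, b) within S \<times> T) H" "open W" "H (a, b) \<in> W"
  obtains d where "d > 0"
    "\<And>x y. x \<in> S \<Longrightarrow> y \<in> T \<Longrightarrow> dist x a < d \<Longrightarrow> dist y b < d \<Longrightarrow> H (x, y) \<in> W"
proof -
  obtain d where "d > 0" and d: "\<And>z. z \<in> S \<times> T \<Longrightarrow> dist z (a, b) < d \<Longrightarrow> H z \<in> W"
    using continuous_within_ball_into_open[OF assms] by metis
  show ?thesis
  proof (rule that[of "d / 2"])
    fix x y assume "x \<in> S" "y \<in> T" "dist x a < d / 2" "dist y b < d / 2"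
    moreover have "dist (x, y) (a, b) \<le> dist x a + dist y b"
      unfolding dist_Pair_Pair by (rule sqrt_sum_squares_le_sum) auto
    ultimately show "H (x, y) \<in> W"
      using d by simp
  qed (use \<open>d > 0\<close> in simp)
qed

lemma lifted_homotopy_continuous_in_chart:
  fixes f :: "'a::metric_space \<Rightarrow> 'b::metric_space"
    and H :: "'c::metric_space \<times> real \<Rightarrow> 'b" and F :: "'c \<Rightarrow> real \<Rightarrow> 'a"
  assumes lh: "local_homeomorphism f"
    and V: "homeomorphism V (f ` V) f g" "open V" "open (f ` V)"
    and H: "continuous_on (U \<times> {0..1}) H"
    and F: "\<And>y. y \<in> U \<Longrightarrow> continuous_on {0..1} (F y)"
      "\<And>y t. y \<in> U \<Longrightarrow> t \<in> {0..1} \<Longrightarrow> f (F y t) = H (y, t)"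
    and y1: "y1 \<in> U" and t: "0 \<le> a" "a \<le> t" "t \<le> 1"
    and start: "continuous (at y1 within U) (\<lambda>y. F y a)" "F y1 a \<in> V"
    and chart: "\<And>y s. y \<in> U \<Longrightarrow> dist y y1 < r \<Longrightarrow> s \<in> {a..t} \<Longrightarrow> H (y, s) \<in> f ` V"
    and "r > 0"
  shows "continuous (at y1 within U) (\<lambda>y. F y t)"
proof -
  obtain r' where "r' > 0" and r': "\<And>y. y \<in> U \<Longrightarrow> dist y y1 < r' \<Longrightarrow> F y a \<in> V"
    using continuous_within_ball_into_open[OF start(1) V(2) start(2)] by metis
  have local_form: "F y t = g (H (y, t))" if y: "y \<in> U" "dist y y1 < min r r'" for y
  proof (rule lift_eq_local_inverse[OF lh V(1) connected_Icc[of a t]])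
    show "continuous_on {a..t} (F y)"
      by (rule continuous_on_subset[OF F(1)[OF y(1)]]) (use t in auto)
    show "continuous_on {a..t} (\<lambda>s. H (y, s))"
      by (rule continuous_on_compose2[OF H]) (use y t in \<open>auto intro!: continuous_intros\<close>)
    show "(\<lambda>s. H (y, s)) ` {a..t} \<subseteq> f ` V"
      using chart y by auto
    show "f (F y s) = H (y, s)" if "s \<in> {a..t}" for s
      using F(2)[OF y(1)] that t by simp
    show "F y a \<in> V"
      using r' y by simp
  qed (use t in auto)
  have "continuous_on U (\<lambda>y. H (y, t))"
    by (rule continuous_on_compose2[OF H]) (use t in \<open>auto intro!: continuous_intros\<close>)
  then have H_cont: "continuous (at y1 within U) (\<lambda>y. H (y, t))"
    using y1 by (simp add: continuous_on_eq_continuous_within)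
  have "H (y1, t) \<in> f ` V"
    using chart[OF y1] \<open>r > 0\<close> t by simp
  then have "isCont g (H (y1, t))"
    using V(3) homeomorphism_cont2[OF V(1)] continuous_on_eq_continuous_at by blast
  then have "continuous (at y1 within U) (\<lambda>y. g (H (y, t)))"
    by (rule continuous_within_compose3[OF _ H_cont])
  then show ?thesis
    by (rule continuous_transform_within[of _ _ _ "min r r'"])
      (use local_form y1 \<open>r > 0\<close> \<open>r' > 0\<close> in auto)
qed

lemma local_homeomorphism_lifted_homotopy_continuous:
  fixes f :: "'a::metric_space \<Rightarrow> 'b::metric_space"
    and H :: "'c::metric_space \<times> real \<Rightarrow> 'b" and F :: "'c \<Rightarrow> real \<Rightarrow> 'a"
  assumes lh: "local_homeomorphism f" and H: "continuous_on (U \<times> {0..1}) H"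
    and F: "\<And>y. y \<in> U \<Longrightarrow> continuous_on {0..1} (F y)"
      "\<And>y t. y \<in> U \<Longrightarrow> t \<in> {0..1} \<Longrightarrow> f (F y t) = H (y, t)"
    and start: "continuous_on U (\<lambda>y. F y 0)"
    and "s \<in> {0..1}"
  shows "continuous_on U (\<lambda>y. F y s)"
  unfolding continuous_on_eq_continuous_within
proof
  fix y1 assume y1: "y1 \<in> U"
  show "continuous (at y1 within U) (\<lambda>y. F y s)"
  proof (rule unit_interval_induction[OF _ \<open>s \<in> {0..1}\<close>])
    fix \<tau> :: real assume \<tau>: "\<tau> \<in> {0..1}"
      and below: "\<And>s. s \<in> {0..<\<tau>} \<Longrightarrow> continuous (at y1 within U) (\<lambda>y. F y s)"
    obtain V g where V: "open V" "F y1 \<tau> \<in> V" "open (f ` V)" "homeomorphism V (f ` V) f g"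
      using lh unfolding local_homeomorphism_def by blast
    have "continuous (at \<tau> within {0..1}) (F y1)"
      using F(1)[OF y1] \<tau> by (simp add: continuous_on_eq_continuous_within)
    then obtain e1 where "e1 > 0" and e1: "\<And>t. t \<in> {0..1} \<Longrightarrow> dist t \<tau> < e1 \<Longrightarrow> F y1 t \<in> V"
      using continuous_within_ball_into_open V(1,2) by metis
    have "continuous (at (y1, \<tau>) within U \<times> {0..1}) H"
      using H y1 \<tau> by (simp add: continuous_on_eq_continuous_within)
    moreover have "H (y1, \<tau>) \<in> f ` V"
      using F(2)[OF y1 \<tau>] V(2) by (metis imageI)
    ultimately obtain d where "d > 0" and d: "\<And>y t. y \<in> U \<Longrightarrow> t \<in> {0..1} \<Longrightarrow>
        dist y y1 < d \<Longrightarrow> dist t \<tau> < d \<Longrightarrow> H (y, t) \<in> f ` V"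
      using continuous_within_Times_ball_into_open V(3) by metis
    define e where "e = min e1 d / 2"
    define t1 where "t1 = max 0 (\<tau> - e)"
    have e: "0 < e" "e < e1" "e < d"
      using \<open>e1 > 0\<close> \<open>d > 0\<close> by (auto simp: e_def)
    have t1: "0 \<le> t1" "t1 \<le> \<tau>" "\<tau> - e \<le> t1"
      using \<tau> e by (auto simp: t1_def)
    have "continuous (at y1 within U) (\<lambda>y. F y t1)"
    proof (cases "t1 = 0")
      case True
      then show ?thesis
        using start y1 by (simp add: continuous_on_eq_continuous_within)
    next
      case False
      then show ?thesis
        using below[of t1] t1 e by (simp add: t1_def)
    qed
    moreover have "F y1 t1 \<in> V"
      using e1[of t1] t1 e \<tau> by (simp add: dist_real_def)
    ultimately have "continuous (at y1 within U) (\<lambda>y. F y t)"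
      if "t \<in> {t1..1}" "t < \<tau> + e" for t
      using that t1 e d \<open>d > 0\<close>
      by (intro lifted_homotopy_continuous_in_chart[OF lh V(4,1,3) H F y1,
            where a=t1 and t=t and r=d])
        (auto simp: dist_real_def)
    then show "\<exists>e>0. \<forall>s\<in>{0..1}. s < \<tau> + e \<longrightarrow> continuous (at y1 within U) (\<lambda>y. F y s)"
      using below t1 \<open>e > 0\<close> by (metis atLeastAtMost_iff atLeastLessThan_iff linorder_not_le
          order_less_le_trans)
  qed
qed

lemma local_homeomorphism_open_section_image:
  fixes f :: "'a::metric_space \<Rightarrow> 'b::topological_space"
  assumes lh: "local_homeomorphism f" and "open U"
    and s: "continuous_on U s" "\<And>y. y \<in> U \<Longrightarrow> f (s y) = y"
  shows "open (s ` U)"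
  unfolding open_subopen[of "s ` U"]
proof
  fix z assume "z \<in> s ` U"
  then obtain y where y: "y \<in> U" "z = s y"
    by blast
  obtain V g where V: "open V" "z \<in> V" "homeomorphism V (f ` V) f g"
    using lh unfolding local_homeomorphism_def by blast
  define W where "W = V \<inter> f -` (U \<inter> s -` V)"
  have "open (U \<inter> s -` V)"
    by (rule continuous_open_preimage[OF s(1) \<open>open U\<close> V(1)])
  then have "open W"
    unfolding W_def
    by (rule continuous_open_preimage[OF local_homeomorphism_continuous[OF lh] V(1)])
  moreover have "z \<in> W"
    using y V(2) s(2) by (simp add: W_def)
  moreover have "W \<subseteq> s ` U"
  proof
    fix w assume w: "w \<in> W"
    then have "s (f w) \<in> V" "f w \<in> U"
      by (auto simp: W_def)
    then have "s (f w) = w"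
      using w s(2) homeomorphism_apply1[OF V(3)] unfolding W_def by (metis IntD1)
    then show "w \<in> s ` U"
      using \<open>f w \<in> U\<close> by (metis imageI)
  qed
  ultimately show "\<exists>W. open W \<and> z \<in> W \<and> W \<subseteq> s ` U"
    by blast
qed

lemma local_homeomorphism_evenly_covered_by_sections:
  fixes f :: "'a::metric_space \<Rightarrow> 'b::topological_space"
  assumes lh: "local_homeomorphism f" and "open U"
    and sections: "\<And>x. x \<in> X \<Longrightarrow> continuous_on U (s x)"
      "\<And>x y. x \<in> X \<Longrightarrow> y \<in> U \<Longrightarrow> f (s x y) = y"
    and cover: "\<And>z. f z \<in> U \<Longrightarrow> \<exists>x\<in>X. s x (f z) = z"
    and separate: "\<And>x x' y. x \<in> X \<Longrightarrow> x' \<in> X \<Longrightarrow> y \<in> U \<Longrightarrow> s x y = s x' y \<Longrightarrow> x = x'"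
  shows "\<exists>v. \<Union>v = f -` U \<and> (\<forall>u\<in>v. open u) \<and> pairwise disjnt v \<and>
    (\<forall>u\<in>v. \<exists>g. homeomorphism u U f g)"
proof (intro exI conjI)
  let ?v = "(\<lambda>x. s x ` U) ` X"
  show "\<Union>?v = f -` U"
  proof
    show "\<Union>?v \<subseteq> f -` U"
      using sections(2) by auto
    show "f -` U \<subseteq> \<Union>?v"
    proof
      fix z assume z: "z \<in> f -` U"
      then obtain x where "x \<in> X" "s x (f z) = z"
        using cover by blast
      then show "z \<in> \<Union>?v"
        using z by (metis UN_iff imageI vimageD)
    qed
  qed
  show "\<forall>u\<in>?v. open u"
    using local_homeomorphism_open_section_image[OF lh \<open>open U\<close> sections] by blast
  show "pairwise disjnt ?v"
  proof (rule pairwiseI)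
    fix u u' assume "u \<in> ?v" "u' \<in> ?v" "u \<noteq> u'"
    then obtain x x' where x: "x \<in> X" "x' \<in> X" "u = s x ` U" "u' = s x' ` U" and "x \<noteq> x'"
      by auto
    have False if "y \<in> U" "y' \<in> U" "s x y = s x' y'" for y y'
    proof -
      have "y = y'"
        using sections(2) x(1,2) that by metis
      then show False
        using separate[OF x(1,2)] that \<open>x \<noteq> x'\<close> by blast
    qed
    then show "disjnt u u'"
      unfolding x disjnt_def by blast
  qed
  show "\<forall>u\<in>?v. \<exists>g. homeomorphism u U f g"
  proof
    fix u assume "u \<in> ?v"
    then obtain x where "x \<in> X" "u = s x ` U"
      by blast
    then have "homeomorphism u U f (s x)"
      using sections local_homeomorphism_continuous[OF lh]
      by (auto simp: homeomorphism_def image_iff)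
    then show "\<exists>g. homeomorphism u U f g"
      by blast
  qed
qed

lemma lifted_contraction_evenly_covered:
  fixes f :: "'a::metric_space \<Rightarrow> 'b::metric_space" and H :: "'b \<times> real \<Rightarrow> 'b"
  assumes lh: "local_homeomorphism f" and "open U"
    and H: "continuous_on (U \<times> {0..1}) H" "\<And>y. y \<in> U \<Longrightarrow> H (y, 0) = y0"
      "\<And>y. y \<in> U \<Longrightarrow> H (y, 1) = y"
    and lift: "\<And>y x. y \<in> U \<Longrightarrow> f x = y0 \<Longrightarrow>
      \<exists>q. path q \<and> pathstart q = x \<and> (\<forall>t\<in>{0..1}. f (q t) = H (y, t))"
    and lift_back: "\<And>z. f z \<in> U \<Longrightarrow>
      \<exists>q. path q \<and> pathstart q = z \<and> (\<forall>t\<in>{0..1}. f (q t) = H (f z, 1 - t))"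
  shows "\<exists>v. \<Union>v = f -` U \<and> (\<forall>u\<in>v. open u) \<and> pairwise disjnt v \<and>
    (\<forall>u\<in>v. \<exists>g. homeomorphism u U f g)"
proof -
  define F where "F x y = (SOME q. path q \<and> pathstart q = x \<and> (\<forall>t\<in>{0..1}. f (q t) = H (y, t)))"
    for x y
  have F: "path (F x y) \<and> pathstart (F x y) = x \<and> (\<forall>t\<in>{0..1}. f (F x y t) = H (y, t))"
    if "y \<in> U" "f x = y0" for y x
    unfolding F_def by (rule someI_ex[OF lift[OF that]])
  have lift_unique: "F x y t = q t"
    if "y \<in> U" "f x = y0" "path q" "\<forall>t\<in>{0..1}. f (q t) = H (y, t)"
      "a \<in> {0..1}" "F x y a = q a" "t \<in> {0..1}" for x y q a t
    using local_homeomorphism_lift_unique[OF lh connected_Icc[of 0 1],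
        where q="F x y" and q'=q and a=a and t=t] F[of y x] that
    by (simp add: path_def)
  define sheet where "sheet x y = pathfinish (F x y)" for x y
  show ?thesis
  proof (rule local_homeomorphism_evenly_covered_by_sections[OF lh \<open>open U\<close>, where s=sheet])
    show "continuous_on U (sheet x)" if "x \<in> f -` {y0}" for x
      unfolding sheet_def pathfinish_def
    proof (rule local_homeomorphism_lifted_homotopy_continuous[OF lh H(1)])
      show "continuous_on U (\<lambda>y. F x y 0)"
        using F that by (simp add: pathstart_def continuous_on_const cong: continuous_on_cong)
    qed (use F that in \<open>auto simp: path_def\<close>)
    show "f (sheet x y) = y" if "x \<in> f -` {y0}" "y \<in> U" for x y
      using F[OF that(2)] H(3)[OF that(2)] that(1) by (simp add: sheet_def pathfinish_def)
    show "x = x'" if "x \<in> f -` {y0}" "x' \<in> f -` {y0}" "y \<in> U" "sheet x y = sheet x' y" for x x' y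
      using lift_unique[OF that(3), of x "F x' y" 1 0] F[OF that(3)] that
      by (simp add: sheet_def pathstart_def pathfinish_def)
    show "\<exists>x\<in>f -` {y0}. sheet x (f z) = z" if z: "f z \<in> U" for z
    proof -
      \<comment> \<open>lift the reversed contraction path of \<open>f z\<close> from \<open>z\<close>; it ends at some \<open>x\<close> over \<open>y0\<close>\<close>
      obtain r where r: "path r" "pathstart r = z" "\<forall>t\<in>{0..1}. f (r t) = H (f z, 1 - t)"
        using lift_back[OF z] by blast
      define x where "x = pathfinish r"
      have "f x = y0"
        using r(3) H(2)[OF z] by (simp add: x_def pathfinish_def)
      moreover have "F x (f z) 1 = reversepath r 1"
      proof (rule lift_unique[OF z \<open>f x = y0\<close>, where a=0])
        show "path (reversepath r)"
          using r(1) by simp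
        show "\<forall>t\<in>{0..1}. f (reversepath r t) = H (f z, t)"
          using r(3) by (auto simp: reversepath_def)
        show "F x (f z) 0 = reversepath r 0"
          using F[OF z \<open>f x = y0\<close>] by (simp add: reversepath_def x_def pathstart_def pathfinish_def)
      qed auto
      ultimately show ?thesis
        using r(2) by (auto simp: sheet_def pathfinish_def reversepath_def pathstart_def)
    qed
  qed
qed

lemma covering_space_continuation_property:
  fixes f :: "'a::metric_space \<Rightarrow> 'b::metric_space"
  assumes cov: "covering_space UNIV f UNIV" and p: "continuous_on {0..1} p"
  shows "continuation_property f p"
  unfolding continuation_property_def
proof (intro ballI allI impI)
  fix b :: real and q :: "real \<Rightarrow> 'a"
  assume b: "b \<in> {0<..1}" and q: "continuous_on {0..<b} q \<and> (\<forall>t\<in>{0..<b}. f (q t) = p t)"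
  obtain T v where T: "p b \<in> T" "openin (top_of_set UNIV) T"
    and v: "\<Union>v = UNIV \<inter> f -` T" "\<forall>u\<in>v. openin (top_of_set UNIV) u" "pairwise disjnt v"
      "\<forall>u\<in>v. \<exists>g. homeomorphism u T f g"
    using cov unfolding covering_space_def by blast
  have "continuous (at b within {0..1}) p"
    using p b by (simp add: continuous_on_eq_continuous_within)
  then obtain d where "d > 0" and d: "\<And>t. t \<in> {0..1} \<Longrightarrow> dist t b < d \<Longrightarrow> p t \<in> T"
    using continuous_within_ball_into_open T by (metis open_openin subtopology_UNIV)
  define a where "a = max 0 (b - d / 2)"
  have a: "0 \<le> a" "a < b" "{a..b} \<subseteq> {0..1}"
    using b \<open>d > 0\<close> by (auto simp: a_def)
  have "p ` {a..b} \<subseteq> T"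
    using d a \<open>d > 0\<close> by (auto simp: a_def dist_real_def)
  then have tail: "q ` {a..<b} \<subseteq> \<Union>v"
    using q a v(1) by force
  have "connected (q ` {a..<b})"
    using q a by (intro connected_continuous_image connected_Ico) (auto intro: continuous_on_subset)
  obtain u where "u \<in> v" "q ` {a..<b} \<subseteq> u"
  proof (rule connected_disjoint_Union_open_pick[OF v(3), of "{q ` {a..<b}}" "q ` {a..<b}"])
    show "\<And>S. S \<in> {q ` {a..<b}} \<Longrightarrow> connected S \<and> S \<noteq> {}"
      using \<open>connected (q ` {a..<b})\<close> a by auto
  qed (use that tail v(2) in auto)
  then obtain g where g: "homeomorphism u T f g"
    using v(4) by blast
  have q_local: "q t = g (p t)" if "t \<in> {a..<b}" for t
    using homeomorphism_apply1[OF g] \<open>q ` {a..<b} \<subseteq> u\<close> q a that by force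
  obtain tn where tn: "\<And>n. tn n \<in> {a..<b}" "tn \<longlonglongrightarrow> b"
    using islimpt_sequential[of b "{a..<b}"] a by auto
  have "tn n \<in> {0..1}" for n
    using tn(1)[of n] a by auto
  then have "(\<lambda>n. p (tn n)) \<longlonglongrightarrow> p b"
    using continuous_on_tendsto_compose[OF p tn(2)] b by simp
  moreover have "isCont g (p b)"
    using homeomorphism_cont2[OF g] T by (simp add: continuous_on_eq_continuous_at)
  ultimately have "(\<lambda>n. g (p (tn n))) \<longlonglongrightarrow> g (p b)"
    using isCont_tendsto_compose by blast
  moreover have "(\<lambda>n. g (p (tn n))) = (\<lambda>n. q (tn n))"
    using q_local tn(1) by simp
  ultimately have "(\<lambda>n. q (tn n)) \<longlonglongrightarrow> g (p b)"
    by simp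
  then show "\<exists>tn. (\<forall>n. tn n \<in> {0..<b}) \<and> tn \<longlonglongrightarrow> b \<and> convergent (\<lambda>n. q (tn n))"
    using tn a unfolding convergent_def by (metis atLeastLessThan_iff order_trans)
qed

lemma in_family_reversepath:
  assumes "P_connected P" "in_family P p"
  shows "in_family P (reversepath p)"
proof -
  obtain p' where "p' \<in> P" and p': "\<forall>t\<in>{0..1}. p' t = p t"
    using assms(2) unfolding in_family_def by blast
  then obtain p'' where "p'' \<in> P" and p'': "\<forall>t\<in>{0..1}. p'' t = reversepath p' t"
    using assms(1) unfolding P_connected_def in_family_def by blast
  have "\<forall>t\<in>{0..1}. p'' t = reversepath p t"
    using p' p'' by (simp add: reversepath_def)
  then show ?thesis
    using \<open>p'' \<in> P\<close> unfolding in_family_def by blast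
qed

lemma continuation_property_cong:
  assumes "\<And>t. t \<in> {0..1} \<Longrightarrow> p t = p' t"
  shows "continuation_property f p \<longleftrightarrow> continuation_property f p'"
proof -
  have "(\<forall>t\<in>{0..<b}. f (q t) = p t) \<longleftrightarrow> (\<forall>t\<in>{0..<b}. f (q t) = p' t)" if "b \<in> {0<..1}" for b q
    using assms that by auto
  then show ?thesis
    unfolding continuation_property_def by blast
qed

lemma covering_space_if_lifts_family_paths:
  fixes f :: "'a::metric_space \<Rightarrow> 'b::metric_space"
  assumes lh: "local_homeomorphism f"
    and conn: "P_connected P" and contr: "locally_P_contractible P"
    and lift: "\<And>p x. in_family P p \<Longrightarrow> f x = pathstart p \<Longrightarrow>
      \<exists>q. path q \<and> pathstart q = x \<and> (\<forall>t\<in>{0..1}. f (q t) = p t)"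
  shows "covering_space UNIV f UNIV"
proof
  show "continuous_on UNIV f"
    by (rule local_homeomorphism_continuous[OF lh])
  have "y \<in> range f" for y
  proof -
    obtain p where "p \<in> P" "pathstart p = f undefined" "pathfinish p = y"
      using conn unfolding P_connected_def by blast
    moreover have "in_family P p"
      using \<open>p \<in> P\<close> unfolding in_family_def by blast
    ultimately obtain q where "\<forall>t\<in>{0..1}. f (q t) = p t"
      using lift by metis
    then have "f (q 1) = y"
      using \<open>pathfinish p = y\<close> by (simp add: pathfinish_def)
    then show ?thesis
      by (metis rangeI)
  qed
  then show "f ` UNIV = UNIV"
    by blast
  fix y0 :: 'b
  obtain U H where U: "open U" "y0 \<in> U" and H: "continuous_on (U \<times> {0..1}) H"
    "\<And>y. y \<in> U \<Longrightarrow> H (y, 0) = y0" "\<And>y. y \<in> U \<Longrightarrow> H (y, 1) = y"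
    and H_family: "\<And>y. y \<in> U \<Longrightarrow> in_family P (\<lambda>t. H (y, t))"
    using contr unfolding locally_P_contractible_def by metis
  have "\<exists>v. \<Union>v = f -` U \<and> (\<forall>u\<in>v. open u) \<and> pairwise disjnt v \<and>
      (\<forall>u\<in>v. \<exists>g. homeomorphism u U f g)"
  proof (rule lifted_contraction_evenly_covered[OF lh U(1) H])
    show "\<exists>q. path q \<and> pathstart q = x \<and> (\<forall>t\<in>{0..1}. f (q t) = H (y, t))"
      if "y \<in> U" "f x = y0" for y x
      using lift[OF H_family[OF that(1)]] H(2)[OF that(1)] that(2) by (simp add: pathstart_def)
    show "\<exists>q. path q \<and> pathstart q = z \<and> (\<forall>t\<in>{0..1}. f (q t) = H (f z, 1 - t))"
      if "f z \<in> U" for z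
      using lift[OF in_family_reversepath[OF conn H_family[OF that]]] H(3)[OF that]
      by (simp add: pathstart_def reversepath_def)
  qed
  then show "\<exists>T. y0 \<in> T \<and> openin (top_of_set UNIV) T \<and> (\<exists>v. \<Union>v = UNIV \<inter> f -` T \<and>
      (\<forall>u\<in>v. openin (top_of_set UNIV) u) \<and> pairwise disjnt v \<and> (\<forall>u\<in>v. \<exists>q. homeomorphism u T f q))"
    using U by auto
qed

theorem theorem1:
  fixes f :: "'a::metric_space \<Rightarrow> 'b::metric_space"
    and P :: "(real \<Rightarrow> 'b) set"
  assumes "local_homeomorphism f"
    and "\<forall>p\<in>P. path p"
    and "P_connected P"
    and "locally_P_contractible P"
  shows "covering_space UNIV f UNIV \<longleftrightarrow> (\<forall>p\<in>P. continuation_property f p)"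
proof
  assume "covering_space UNIV f UNIV"
  then show "\<forall>p\<in>P. continuation_property f p"
    using assms(2) covering_space_continuation_property unfolding path_def by blast
next
  assume cp: "\<forall>p\<in>P. continuation_property f p"
  have "\<exists>q. path q \<and> pathstart q = x \<and> (\<forall>t\<in>{0..1}. f (q t) = p t)"
    if p: "in_family P p" and x: "f x = pathstart p" for p x
  proof -
    obtain p' where "p' \<in> P" and same: "\<And>t. t \<in> {0..1} \<Longrightarrow> p' t = p t"
      using p unfolding in_family_def by blast
    then have "path p" "continuation_property f p"
      using assms(2) cp path_eq continuation_property_cong by metis+
    then show ?thesis
      using continuation_property_lift_path[OF assms(1)] x by metis
  qed
  then show "covering_space UNIV f UNIV"
    by (rule covering_space_if_lifts_family_paths[OF assms(1,3,4)])
qed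

end
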